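(* Fix $\vartheta_1\in(0,\pi/2)$ and $\varphi_1\in[0,\pi]$. If $\eta<\eta'$ are two points of $I=\bigcup_{k\ge0}I_k$ with $\Phi(\eta)=\Phi(\eta')=\varphi_1$, then $S(\eta)<S(\eta')$, where $S(\eta)=\sin\vartheta_1\,\eta/|\sin\eta|$.
   Context: For integers $k\ge0$ let $I_k=[\vartheta_1+k\pi,(k+1)\pi-\vartheta_1]$. For $\eta\in I_k$ set $\gamma(\eta)=\sqrt{1-\sin^2\vartheta_1/\sin^2\eta}$ and $$\Phi(\eta)=-\eta\,\gamma(\eta)+k\pi+\arccos\Big(\frac{\cos(\eta-k\pi)}{\cos\vartheta_1}\Big),\qquad\arccos\in[0,\pi].$$ (In the paper the solutions of $\Phi(\eta)=\varphi_1$ parametrize CR-geodesics from $(1,0,\dots,0)$ to points with $z_1=\cos\vartheta_1e^{i\varphi_1}$, and $S(\eta)$ is the corresponding geodesic length.) *)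

theory Defs
  imports Complex_Main
begin

definition Ik :: "real \<Rightarrow> nat \<Rightarrow> real set" where
  "Ik th1 k = {th1 + real k * pi .. real (k+1) * pi - th1}"

definition Iall :: "real \<Rightarrow> real set" where
  "Iall th1 = (\<Union>k. Ik th1 k)"

text \<open>The index k with eta in I_k (unique since the I_k are disjoint for th1 > 0).\<close>
definition idx :: "real \<Rightarrow> real \<Rightarrow> nat" where
  "idx th1 eta = (THE k. eta \<in> Ik th1 k)"

definition gam :: "real \<Rightarrow> real \<Rightarrow> real" where
  "gam th1 eta = sqrt (1 - (sin th1)\<^sup>2 / (sin eta)\<^sup>2)"

definition Phi :: "real \<Rightarrow> real \<Rightarrow> real" where
  "Phi th1 eta = (let k = idx th1 eta in
     - eta * gam th1 eta + real k * pi + arccos (cos (eta - real k * pi) / cos th1))"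

definition S :: "real \<Rightarrow> real \<Rightarrow> real" where
  "S th1 eta = sin th1 * eta / \<bar>sin eta\<bar>"

end

theory Submission
  imports Defs
begin

text \<open>On I_k write t = eta - k pi and e = t + k pi. At a solution of Phi = phi1 the quantity
  x = k pi + arccos (cos t / cos th1) - phi1 equals e gam, so S^2 = e^2 - x^2 = (e - x) (e + x).
  Within one I_k the derivative of Phi has the sign of sin t - e cos t, which can only change from
  negative to positive; hence Phi < phi1 strictly between two solutions, and there e^2 - x^2, whose
  derivative is a positive multiple of phi1 - Phi, increases. For solutions in I_k and I_k' with
  k < k', the factor e - x does not decrease when moving left because arccos (cos t / cos th1) - t
  is increasing, and e + x increases because of the shift by 2 (k' - k) pi; if instead the second
  solution lies to the right, Phi on I_k reaches (k + 1) pi \<ge> phi1 at the end of I_k, so there is a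
  further solution in I_k to compare with.\<close>

lemma of_nat_mult_pi_add_pi_le:
  assumes "j < k"
  shows "real j * pi + pi \<le> real k * pi"
proof -
  have "(real j + 1) * pi \<le> real k * pi"
    using assms by (intro mult_right_mono) auto
  then show ?thesis by (simp add: distrib_right)
qed

lemma tan_minus_id_less:
  assumes "0 < y" "y < s" "s < pi/2"
  shows "tan y - y < tan s - s"
proof -
  have cos_pos: "cos x > 0" if "y \<le> x" "x \<le> s" for x
    using that assms by (intro cos_gt_zero) auto
  show ?thesis
  proof (rule DERIV_pos_imp_increasing_open[OF \<open>y < s\<close>])
    fix x assume x: "y < x" "x < s"
    have "cos x > 0" "sin x > 0" using cos_pos x assms by (auto intro: sin_gt_zero)
    then have "(cos x)^2 < 1"
      using sin_cos_squared_add[of x] zero_less_power[of "sin x" 2] by linarith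
    with \<open>cos x > 0\<close> have "inverse ((cos x)^2) - 1 > 0" by (simp add: one_less_inverse)
    moreover have "((\<lambda>x. tan x - x) has_real_derivative inverse ((cos x)^2) - 1) (at x)"
      using \<open>cos x > 0\<close> by (auto intro!: derivative_eq_intros)
    ultimately show "\<exists>d. ((\<lambda>x. tan x - x) has_real_derivative d) (at x) \<and> d > 0" by blast
  next
    show "continuous_on {y..s} (\<lambda>x. tan x - x)"
      using cos_pos by (force intro!: continuous_at_imp_continuous_on continuous_intros isCont_tan)
  qed
qed

text \<open>Where the cosine is positive the hypothesis reads tan y - y \<ge> c, and tan x - x increases.\<close>
lemma sin_gt_add_mul_cos_persists:
  fixes c y s :: real
  assumes "0 \<le> c" "0 < y" "y < s" "s < pi" and "(y + c) * cos y \<le> sin y"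
  shows "(s + c) * cos s < sin s"
proof (cases "cos s \<le> 0")
  case True
  have "sin s > 0" using assms by (intro sin_gt_zero) auto
  moreover have "(s + c) * cos s \<le> 0" using True assms by (intro mult_nonneg_nonpos) auto
  ultimately show ?thesis by linarith
next
  case False
  have "s < pi/2"
  proof (rule ccontr)
    assume "\<not> s < pi/2"
    then have "cos (pi - s) \<ge> 0" using assms by (intro cos_ge_zero) auto
    with False show False by simp
  qed
  have "cos y > 0" using assms \<open>s < pi/2\<close> by (intro cos_gt_zero) auto
  then have "y + c \<le> tan y" using assms(5) by (simp add: tan_def le_divide_eq)
  moreover have "tan y - y < tan s - s" using tan_minus_id_less assms \<open>s < pi/2\<close> by blast
  ultimately have "s + c < tan s" by linarith
  then show ?thesis using False by (simp add: tan_def less_divide_eq)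
qed

definition psi :: "real \<Rightarrow> real \<Rightarrow> real" where
  "psi th1 t = arccos (cos t / cos th1)"

definition rho :: "real \<Rightarrow> real \<Rightarrow> real" where
  "rho th1 t = sqrt ((sin t)^2 - (sin th1)^2)"

text \<open>Phi and S on I_k, in the variable t = eta - k pi ranging over [th1, pi - th1].\<close>
definition Phi_branch :: "real \<Rightarrow> nat \<Rightarrow> real \<Rightarrow> real" where
  "Phi_branch th1 k t = - (t + real k * pi) * gam th1 t + real k * pi + psi th1 t"

definition S_branch :: "real \<Rightarrow> nat \<Rightarrow> real \<Rightarrow> real" where
  "S_branch th1 k t = sin th1 * (t + real k * pi) / sin t"

definition S_sq_branch :: "real \<Rightarrow> nat \<Rightarrow> real \<Rightarrow> real \<Rightarrow> real" where
  "S_sq_branch th1 k phi t = (t + real k * pi)^2 - (real k * pi + psi th1 t - phi)^2"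

context
  fixes th1 :: real
  assumes th1: "0 < th1" "th1 < pi/2"
begin

lemma sin_th1_pos: "sin th1 > 0"
  using th1 by (simp add: sin_gt_zero)

lemma cos_th1_pos: "cos th1 > 0"
  using th1 by (simp add: cos_gt_zero)

lemma sin_th1_le_sin:
  assumes "th1 \<le> t" "t \<le> pi - th1"
  shows "sin th1 \<le> sin t"
proof (cases "t \<le> pi/2")
  case True
  then show ?thesis using assms th1 by (intro sin_monotone_2pi_le) auto
next
  case False
  then have "sin th1 \<le> sin (pi - t)" using assms th1 by (intro sin_monotone_2pi_le) auto
  then show ?thesis by simp
qed

lemma sin_th1_less_sin:
  assumes "th1 < t" "t < pi - th1"
  shows "sin th1 < sin t"
proof (cases "t \<le> pi/2")
  case True
  then show ?thesis using assms th1 by (intro sin_monotone_2pi) auto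
next
  case False
  then have "sin th1 < sin (pi - t)" using assms th1 by (intro sin_monotone_2pi) auto
  then show ?thesis by simp
qed

lemma sin_pos_on_branch:
  assumes "th1 \<le> t" "t \<le> pi - th1"
  shows "sin t > 0"
  using sin_th1_le_sin[OF assms] sin_th1_pos by linarith

lemma rho_sq:
  assumes "th1 \<le> t" "t \<le> pi - th1"
  shows "(rho th1 t)^2 = (sin t)^2 - (sin th1)^2"
  using sin_th1_le_sin[OF assms] sin_th1_pos unfolding rho_def by (simp add: power_mono)

lemma rho_nonneg:
  assumes "th1 \<le> t" "t \<le> pi - th1"
  shows "rho th1 t \<ge> 0"
  using sin_th1_le_sin[OF assms] sin_th1_pos unfolding rho_def by (simp add: power_mono)

lemma rho_pos:
  assumes "th1 < t" "t < pi - th1"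
  shows "rho th1 t > 0"
  using sin_th1_less_sin[OF assms] sin_th1_pos unfolding rho_def by (simp add: power_strict_mono)

lemma rho_less_sin:
  assumes "th1 \<le> t" "t \<le> pi - th1"
  shows "rho th1 t < sin t"
proof -
  have "(rho th1 t)^2 < (sin t)^2" using rho_sq[OF assms] sin_th1_pos by simp
  then show ?thesis using sin_pos_on_branch[OF assms] by (simp add: power_less_imp_less_base)
qed

lemma gam_eq_rho_div_sin:
  assumes "th1 \<le> t" "t \<le> pi - th1"
  shows "gam th1 t = rho th1 t / sin t"
proof -
  have "sin t > 0" using sin_pos_on_branch[OF assms] .
  then have "1 - (sin th1)^2 / (sin t)^2 = ((sin t)^2 - (sin th1)^2) / (sin t)^2"
    by (simp add: field_simps)
  with \<open>sin t > 0\<close> show ?thesis unfolding gam_def rho_def by (simp add: real_sqrt_divide)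
qed

lemma gam_nonneg_less_one:
  assumes "th1 \<le> t" "t \<le> pi - th1"
  shows "0 \<le> gam th1 t" "gam th1 t < 1"
  using gam_eq_rho_div_sin[OF assms] rho_nonneg[OF assms] rho_less_sin[OF assms]
    sin_pos_on_branch[OF assms] by auto

lemma one_minus_cos_div_sq:
  "1 - (cos t / cos th1)^2 = ((sin t)^2 - (sin th1)^2) / (cos th1)^2"
  using cos_th1_pos sin_cos_squared_add[of t] sin_cos_squared_add[of th1]
  by (simp add: field_simps)

lemma abs_cos_div_le_one:
  assumes "th1 \<le> t" "t \<le> pi - th1"
  shows "\<bar>cos t / cos th1\<bar> \<le> 1"
proof -
  have "(sin th1)^2 \<le> (sin t)^2"
    using sin_th1_le_sin[OF assms] sin_th1_pos by (intro power_mono) auto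
  then have "(cos t)^2 \<le> (cos th1)^2"
    using sin_cos_squared_add[of t] sin_cos_squared_add[of th1] by linarith
  then have "\<bar>cos t\<bar> \<le> \<bar>cos th1\<bar>" by (simp add: abs_le_square_iff)
  then show ?thesis using cos_th1_pos by (simp add: abs_divide)
qed

lemma abs_cos_div_less_one:
  assumes "th1 < t" "t < pi - th1"
  shows "\<bar>cos t / cos th1\<bar> < 1"
proof -
  have "(sin th1)^2 < (sin t)^2"
    using sin_th1_less_sin[OF assms] sin_th1_pos by (intro power_strict_mono) auto
  then have "(cos t)^2 < (cos th1)^2"
    using sin_cos_squared_add[of t] sin_cos_squared_add[of th1] by linarith
  then have "\<bar>cos t\<bar> < \<bar>cos th1\<bar>" using abs_le_square_iff[of "cos th1" "cos t"] by linarith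
  then show ?thesis using cos_th1_pos by (simp add: abs_divide)
qed

lemma psi_bounds:
  assumes "th1 \<le> t" "t \<le> pi - th1"
  shows "0 \<le> psi th1 t" "psi th1 t \<le> pi"
  using abs_cos_div_le_one[OF assms] unfolding psi_def abs_le_iff
  by (auto intro: arccos_lbound arccos_ubound)

lemma S_branch_pos:
  assumes "th1 \<le> t" "t \<le> pi - th1"
  shows "S_branch th1 k t > 0"
proof -
  have "t + real k * pi > 0" using assms th1 by (simp add: add_pos_nonneg)
  then show ?thesis unfolding S_branch_def using sin_th1_pos sin_pos_on_branch[OF assms] by simp
qed

lemma Phi_branch_right_end: "Phi_branch th1 k (pi - th1) = real (k + 1) * pi"
  using sin_th1_pos cos_th1_pos unfolding Phi_branch_def gam_def psi_def by (simp add: algebra_simps)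

lemma Phi_branch_shift:
  "Phi_branch th1 k' t - Phi_branch th1 k t = (real k' - real k) * pi * (1 - gam th1 t)"
  unfolding Phi_branch_def by (simp add: algebra_simps)

lemma S_sq_branch_at_solution:
  assumes "th1 \<le> t" "t \<le> pi - th1" "Phi_branch th1 k t = phi"
  shows "S_sq_branch th1 k phi t = (S_branch th1 k t)^2"
proof -
  define e where "e = t + real k * pi"
  have "real k * pi + psi th1 t - phi = e * gam th1 t"
    using assms(3) unfolding Phi_branch_def e_def by (simp add: algebra_simps)
  then have "S_sq_branch th1 k phi t = e^2 * (1 - (gam th1 t)^2)"
    unfolding S_sq_branch_def e_def[symmetric] by (simp add: power_mult_distrib algebra_simps)
  also have "1 - (gam th1 t)^2 = (sin th1 / sin t)^2"
    unfolding gam_eq_rho_div_sin[OF assms(1,2)] power_divide rho_sq[OF assms(1,2)]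
    using sin_pos_on_branch[OF assms(1,2)] by (simp add: field_simps)
  finally show ?thesis unfolding S_branch_def e_def[symmetric] by (simp add: power_mult_distrib power_divide)
qed

lemma DERIV_psi:
  assumes "th1 < t" "t < pi - th1"
  shows "(psi th1 has_real_derivative sin t / rho th1 t) (at t)"
proof -
  have "-1 < cos t / cos th1" "cos t / cos th1 < 1"
    using abs_cos_div_less_one[OF assms] by linarith+
  from DERIV_arccos[OF this] have
    "((\<lambda>x. arccos (cos x / cos th1)) has_real_derivative
       inverse (- sqrt (1 - (cos t / cos th1)^2)) * (- sin t / cos th1)) (at t)"
    by (rule DERIV_chain2) (use cos_th1_pos in \<open>auto intro!: derivative_eq_intros\<close>)
  moreover have "sqrt (1 - (cos t / cos th1)^2) = rho th1 t / cos th1"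
    unfolding one_minus_cos_div_sq rho_def using cos_th1_pos by (simp add: real_sqrt_divide)
  ultimately show ?thesis
    using cos_th1_pos unfolding psi_def[abs_def] by (simp add: field_simps)
qed

lemma DERIV_gam:
  assumes "th1 < t" "t < pi - th1"
  shows "(gam th1 has_real_derivative (sin th1)^2 * cos t / ((sin t)^2 * rho th1 t)) (at t)"
proof -
  have s: "sin t > 0" and r: "rho th1 t > 0"
    using sin_pos_on_branch rho_pos assms by auto
  have sqrt_eq: "sqrt (1 - (sin th1)^2 / (sin t)^2) = rho th1 t / sin t"
    using gam_eq_rho_div_sin assms unfolding gam_def by simp
  have "0 < 1 - (sin th1)^2 / (sin t)^2"
    using sin_th1_less_sin[OF assms] sin_th1_pos s by (simp add: field_simps power_strict_mono)
  moreover have "((\<lambda>x. 1 - (sin th1)^2 / (sin x)^2) has_real_derivative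
      2 * (sin th1)^2 * cos t / (sin t)^3) (at t)"
    using s by (auto intro!: derivative_eq_intros simp: field_simps power2_eq_square power3_eq_cube)
  ultimately have "(gam th1 has_real_derivative
      inverse (sqrt (1 - (sin th1)^2 / (sin t)^2)) / 2 * (2 * (sin th1)^2 * cos t / (sin t)^3)) (at t)"
    unfolding gam_def[abs_def] by (rule DERIV_chain2[OF DERIV_real_sqrt])
  then show ?thesis
    unfolding sqrt_eq using s r by (simp add: field_simps power2_eq_square power3_eq_cube)
qed

lemma DERIV_Phi_branch:
  assumes "th1 < t" "t < pi - th1"
  shows "(Phi_branch th1 k has_real_derivative
     (sin th1)^2 / ((sin t)^2 * rho th1 t) * (sin t - (t + real k * pi) * cos t)) (at t)"
proof -
  have t: "th1 \<le> t" "t \<le> pi - th1" using assms by auto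
  define D where "D = (sin th1)^2 * cos t / ((sin t)^2 * rho th1 t)"
  have "(Phi_branch th1 k has_real_derivative
      sin t / rho th1 t - gam th1 t - (t + real k * pi) * D) (at t)"
    unfolding Phi_branch_def[abs_def] using DERIV_gam[OF assms, folded D_def]
    by (auto intro!: derivative_eq_intros DERIV_psi[OF assms] simp: algebra_simps)
  then show ?thesis
  proof (rule DERIV_cong)
    have s: "sin t > 0" and r: "rho th1 t > 0"
      using sin_pos_on_branch[OF t] rho_pos[OF assms] by auto
    have "sin t / rho th1 t - gam th1 t = ((sin t)^2 - (rho th1 t)^2) / (sin t * rho th1 t)"
      unfolding gam_eq_rho_div_sin[OF t] using s r by (simp add: field_simps power2_eq_square)
    also have "\<dots> = (sin th1)^2 / (sin t * rho th1 t)"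
      using rho_sq[OF t] by simp
    also have "\<dots> = (sin th1)^2 / ((sin t)^2 * rho th1 t) * (sin t - (t + real k * pi) * cos t)
        + (t + real k * pi) * D"
      unfolding D_def using s r by (simp add: field_simps power2_eq_square)
    finally show "sin t / rho th1 t - gam th1 t - (t + real k * pi) * D
      = (sin th1)^2 / ((sin t)^2 * rho th1 t) * (sin t - (t + real k * pi) * cos t)"
      by simp
  qed
qed

lemma DERIV_S_sq_branch:
  assumes "th1 < t" "t < pi - th1"
  shows "(S_sq_branch th1 k phi has_real_derivative
     2 * sin t / rho th1 t * (phi - Phi_branch th1 k t)) (at t)"
proof -
  have t: "th1 \<le> t" "t \<le> pi - th1" using assms by auto
  have "(S_sq_branch th1 k phi has_real_derivative
      2 * (t + real k * pi) - 2 * (real k * pi + psi th1 t - phi) * (sin t / rho th1 t)) (at t)"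
    unfolding S_sq_branch_def[abs_def] by (auto intro!: derivative_eq_intros DERIV_psi[OF assms])
  then show ?thesis
  proof (rule DERIV_cong)
    show "2 * (t + real k * pi) - 2 * (real k * pi + psi th1 t - phi) * (sin t / rho th1 t)
        = 2 * sin t / rho th1 t * (phi - Phi_branch th1 k t)"
      unfolding Phi_branch_def gam_eq_rho_div_sin[OF t]
      using sin_pos_on_branch[OF t] rho_pos[OF assms] by (simp add: field_simps)
  qed
qed

lemma continuous_on_psi: "continuous_on {th1..pi - th1} (psi th1)"
proof -
  have "-1 \<le> cos t / cos th1 \<and> cos t / cos th1 \<le> 1" if "t \<in> {th1..pi - th1}" for t
    using abs_cos_div_le_one[of t] that unfolding abs_le_iff by auto
  then show ?thesis
    unfolding psi_def[abs_def] using cos_th1_pos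
    by (intro continuous_on_arccos continuous_intros) auto
qed

lemma continuous_on_gam: "continuous_on {th1..pi - th1} (gam th1)"
  unfolding gam_def[abs_def] using sin_pos_on_branch
  by (force intro!: continuous_intros)

lemma continuous_on_Phi_branch: "continuous_on {th1..pi - th1} (Phi_branch th1 k)"
  unfolding Phi_branch_def[abs_def]
  by (intro continuous_intros continuous_on_gam continuous_on_psi)

lemma continuous_on_S_sq_branch: "continuous_on {th1..pi - th1} (S_sq_branch th1 k phi)"
  unfolding S_sq_branch_def[abs_def] by (intro continuous_intros continuous_on_psi)

lemma Phi_branch_less_if_slope_pos:
  assumes "th1 \<le> y" "y < s" "s \<le> pi - th1"
    and "\<And>x. y < x \<Longrightarrow> x < s \<Longrightarrow> (x + real k * pi) * cos x < sin x"
  shows "Phi_branch th1 k y < Phi_branch th1 k s"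
proof (rule DERIV_pos_imp_increasing_open[OF \<open>y < s\<close>])
  fix x assume x: "y < x" "x < s"
  then have x': "th1 < x" "x < pi - th1" using assms by auto
  have "(sin th1)^2 / ((sin x)^2 * rho th1 x) > 0"
    using sin_th1_pos sin_th1_less_sin[OF x'] rho_pos[OF x'] by simp
  then have "(sin th1)^2 / ((sin x)^2 * rho th1 x) * (sin x - (x + real k * pi) * cos x) > 0"
    by (rule mult_pos_pos) (use assms(4)[OF x] in simp)
  with DERIV_Phi_branch[OF x', of k]
  show "\<exists>d. (Phi_branch th1 k has_real_derivative d) (at x) \<and> d > 0" by blast
next
  show "continuous_on {y..s} (Phi_branch th1 k)"
    by (rule continuous_on_subset[OF continuous_on_Phi_branch]) (use assms in auto)
qed

lemma Phi_branch_greater_if_slope_neg: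
  assumes "th1 \<le> y" "y < s" "s \<le> pi - th1"
    and "\<And>x. y < x \<Longrightarrow> x < s \<Longrightarrow> sin x < (x + real k * pi) * cos x"
  shows "Phi_branch th1 k s < Phi_branch th1 k y"
proof (rule DERIV_neg_imp_decreasing_open[OF \<open>y < s\<close>])
  fix x assume x: "y < x" "x < s"
  then have x': "th1 < x" "x < pi - th1" using assms by auto
  have "(sin th1)^2 / ((sin x)^2 * rho th1 x) > 0"
    using sin_th1_pos sin_th1_less_sin[OF x'] rho_pos[OF x'] by simp
  then have "(sin th1)^2 / ((sin x)^2 * rho th1 x) * (sin x - (x + real k * pi) * cos x) < 0"
    by (rule mult_pos_neg) (use assms(4)[OF x] in simp)
  with DERIV_Phi_branch[OF x', of k]
  show "\<exists>d. (Phi_branch th1 k has_real_derivative d) (at x) \<and> d < 0" by blast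
next
  show "continuous_on {y..s} (Phi_branch th1 k)"
    by (rule continuous_on_subset[OF continuous_on_Phi_branch]) (use assms in auto)
qed

lemma Phi_branch_less_between_roots:
  assumes "th1 \<le> p" "p < x" "x < q" "q \<le> pi - th1"
    and "Phi_branch th1 k p = phi" "Phi_branch th1 k q = phi"
  shows "Phi_branch th1 k x < phi"
proof (cases "(x + real k * pi) * cos x \<le> sin x")
  case True
  have "Phi_branch th1 k x < Phi_branch th1 k q"
  proof (rule Phi_branch_less_if_slope_pos)
    fix z assume "x < z" "z < q"
    then show "(z + real k * pi) * cos z < sin z"
      using sin_gt_add_mul_cos_persists[OF _ _ _ _ True] assms th1 by auto
  qed (use assms in auto)
  with assms show ?thesis by simp
next
  case False
  have "Phi_branch th1 k x < Phi_branch th1 k p"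
  proof (rule Phi_branch_greater_if_slope_neg)
    fix z assume "p < z" "z < x"
    then show "sin z < (z + real k * pi) * cos z"
      using sin_gt_add_mul_cos_persists[of "real k * pi" z x] False assms th1 by force
  qed (use assms in auto)
  with assms show ?thesis by simp
qed

lemma S_branch_less_same_branch:
  assumes "th1 \<le> p" "p < q" "q \<le> pi - th1"
    and "Phi_branch th1 k p = phi" "Phi_branch th1 k q = phi"
  shows "S_branch th1 k p < S_branch th1 k q"
proof -
  have "S_sq_branch th1 k phi p < S_sq_branch th1 k phi q"
  proof (rule DERIV_pos_imp_increasing_open[OF \<open>p < q\<close>])
    fix x assume x: "p < x" "x < q"
    then have x': "th1 < x" "x < pi - th1" using assms by auto
    have "Phi_branch th1 k x < phi"
      using Phi_branch_less_between_roots[of p x q k phi] x assms by simp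
    then have "2 * sin x / rho th1 x * (phi - Phi_branch th1 k x) > 0"
      using sin_pos_on_branch[of x] rho_pos[OF x'] x' by simp
    with DERIV_S_sq_branch[OF x']
    show "\<exists>d. (S_sq_branch th1 k phi has_real_derivative d) (at x) \<and> d > 0" by blast
  next
    show "continuous_on {p..q} (S_sq_branch th1 k phi)"
      by (rule continuous_on_subset[OF continuous_on_S_sq_branch]) (use assms in auto)
  qed
  then have "(S_branch th1 k p)^2 < (S_branch th1 k q)^2"
    using S_sq_branch_at_solution assms by simp
  then show ?thesis
    using S_branch_pos[of q k] assms by (simp add: power_less_imp_less_base)
qed

lemma diff_le_psi_diff:
  assumes "th1 \<le> y" "y \<le> s" "s \<le> pi - th1"
  shows "s - y \<le> psi th1 s - psi th1 y"
proof -
  have "psi th1 y - y \<le> psi th1 s - s"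
  proof (rule DERIV_nonneg_imp_increasing_open[OF \<open>y \<le> s\<close>])
    fix x assume "y < x" "x < s"
    then have x: "th1 < x" "x < pi - th1" using assms by auto
    have "sin x / rho th1 x - 1 \<ge> 0"
      using rho_less_sin[of x] rho_pos[OF x] x by simp
    moreover have "((\<lambda>x. psi th1 x - x) has_real_derivative sin x / rho th1 x - 1) (at x)"
      by (auto intro!: derivative_eq_intros DERIV_psi[OF x])
    ultimately show "\<exists>d. ((\<lambda>x. psi th1 x - x) has_real_derivative d) (at x) \<and> d \<ge> 0" by blast
  next
    show "continuous_on {y..s} (\<lambda>x. psi th1 x - x)"
      by (intro continuous_intros continuous_on_subset[OF continuous_on_psi]) (use assms in auto)
  qed
  then show ?thesis by simp
qed

lemma S_branch_less_higher_branch_left: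
  assumes "k < k'" "th1 \<le> tq" "tq \<le> tp" "tp \<le> pi - th1"
    and "Phi_branch th1 k tp = phi" "Phi_branch th1 k' tq = phi"
  shows "S_branch th1 k tp < S_branch th1 k' tq"
proof -
  have tp: "th1 \<le> tp" "tp \<le> pi - th1" and tq: "th1 \<le> tq" "tq \<le> pi - th1"
    using assms by auto
  define eP xP eQ xQ where
    "eP = tp + real k * pi" and "xP = real k * pi + psi th1 tp - phi" and
    "eQ = tq + real k' * pi" and "xQ = real k' * pi + psi th1 tq - phi"
  have "xP = eP * gam th1 tp"
    using assms(5) unfolding Phi_branch_def xP_def eP_def by (simp add: algebra_simps)
  moreover have "eP > 0" unfolding eP_def using tp th1 by (simp add: add_pos_nonneg)
  ultimately have "0 < eP - xP" "0 \<le> eP + xP"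
    using gam_nonneg_less_one[OF tp] by (simp_all add: algebra_simps)
  have "eP - xP \<le> eQ - xQ"
    using diff_le_psi_diff[of tq tp] assms unfolding eP_def xP_def eQ_def xQ_def by simp
  have "real k * pi + pi \<le> real k' * pi"
    using assms(1) by (rule of_nat_mult_pi_add_pi_le)
  then have "eP + xP < eQ + xQ"
    using psi_bounds[OF tp] psi_bounds[OF tq] tp tq th1 unfolding eP_def xP_def eQ_def xQ_def
    by linarith
  have "(S_branch th1 k tp)^2 = (eP - xP) * (eP + xP)"
    using S_sq_branch_at_solution[OF tp assms(5)] unfolding S_sq_branch_def eP_def xP_def
    by (simp add: power2_eq_square algebra_simps)
  also have "\<dots> < (eP - xP) * (eQ + xQ)"
    using \<open>0 < eP - xP\<close> \<open>eP + xP < eQ + xQ\<close> by simp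
  also have "\<dots> \<le> (eQ - xQ) * (eQ + xQ)"
    using \<open>eP - xP \<le> eQ - xQ\<close> \<open>0 \<le> eP + xP\<close> \<open>eP + xP < eQ + xQ\<close>
    by (intro mult_right_mono) auto
  also have "\<dots> = (S_branch th1 k' tq)^2"
    using S_sq_branch_at_solution[OF tq assms(6)] unfolding S_sq_branch_def eQ_def xQ_def
    by (simp add: power2_eq_square algebra_simps)
  finally show ?thesis
    using S_branch_pos[OF tq, of k'] by (simp add: power_less_imp_less_base)
qed

lemma S_branch_less_higher_branch:
  assumes "k < k'" "th1 \<le> tp" "tp \<le> pi - th1" "th1 \<le> tq" "tq \<le> pi - th1"
    and "Phi_branch th1 k tp = phi" "Phi_branch th1 k' tq = phi" "phi \<le> pi"
  shows "S_branch th1 k tp < S_branch th1 k' tq"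
proof (cases "tq \<le> tp")
  case True
  then show ?thesis using S_branch_less_higher_branch_left assms by blast
next
  case False
  have "(real k' - real k) * pi * (1 - gam th1 tq) > 0"
    using assms(1) gam_nonneg_less_one[OF assms(4,5)] by simp
  then have "Phi_branch th1 k tq < phi"
    using Phi_branch_shift[of k' tq k] assms by linarith
  moreover have "phi \<le> Phi_branch th1 k (pi - th1)"
    unfolding Phi_branch_right_end using assms(8) by (simp add: distrib_right add_increasing2)
  moreover have "continuous_on {tq..pi - th1} (Phi_branch th1 k)"
    by (rule continuous_on_subset[OF continuous_on_Phi_branch]) (use assms in auto)
  ultimately obtain t' where t': "tq \<le> t'" "t' \<le> pi - th1" "Phi_branch th1 k t' = phi"
    using IVT'[of "Phi_branch th1 k" tq phi "pi - th1"] assms(5) by auto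
  with \<open>Phi_branch th1 k tq < phi\<close> False have "tp < t'" by fastforce
  then have "S_branch th1 k tp < S_branch th1 k t'"
    using S_branch_less_same_branch assms t' by blast
  also have "\<dots> < S_branch th1 k' tq"
    using S_branch_less_higher_branch_left[of k k' tq t' phi] assms t' by blast
  finally show ?thesis .
qed

lemma mem_Ik_iff: "eta \<in> Ik th1 k \<longleftrightarrow> th1 \<le> eta - real k * pi \<and> eta - real k * pi \<le> pi - th1"
  unfolding Ik_def by (auto simp: algebra_simps)

lemma Ik_less_Ik:
  assumes "eta \<in> Ik th1 j" "eta' \<in> Ik th1 k" "j < k"
  shows "eta < eta'"
proof -
  have "real j * pi + pi \<le> real k * pi"
    using assms(3) by (rule of_nat_mult_pi_add_pi_le)
  then show ?thesis using assms(1,2) th1 unfolding mem_Ik_iff by linarith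
qed

lemma idx_eq:
  assumes "eta \<in> Ik th1 k"
  shows "idx th1 eta = k"
  unfolding idx_def
proof (rule the_equality)
  fix j assume "eta \<in> Ik th1 j"
  with assms show "j = k" using Ik_less_Ik by (metis less_irrefl nat_neq_iff)
qed fact

lemma Phi_eq_Phi_branch:
  assumes "eta \<in> Ik th1 k"
  shows "Phi th1 eta = Phi_branch th1 k (eta - real k * pi)"
proof -
  have "(sin eta)^2 = (sin (eta - real k * pi))^2"
    by (simp add: sin_diff power2_eq_square)
  then show ?thesis
    unfolding Phi_def Phi_branch_def psi_def gam_def idx_eq[OF assms] Let_def by simp
qed

lemma S_eq_S_branch:
  assumes "eta \<in> Ik th1 k"
  shows "S th1 eta = S_branch th1 k (eta - real k * pi)"
proof -
  have "\<bar>sin eta\<bar> = \<bar>sin (eta - real k * pi)\<bar>"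
    by (simp add: sin_diff abs_mult)
  also have "\<dots> = sin (eta - real k * pi)"
    using sin_pos_on_branch assms unfolding mem_Ik_iff by (simp add: less_imp_le)
  finally show ?thesis unfolding S_def S_branch_def by simp
qed

end

theorem proposition5p76:
  fixes th1 phi1 eta eta' :: real
  assumes "0 < th1" "th1 < pi / 2"
    and "0 \<le> phi1" "phi1 \<le> pi"
    and "eta \<in> Iall th1" "eta' \<in> Iall th1"
    and "eta < eta'"
    and "Phi th1 eta = phi1" "Phi th1 eta' = phi1"
  shows "S th1 eta < S th1 eta'"
proof -
  obtain k k' where k: "eta \<in> Ik th1 k" and k': "eta' \<in> Ik th1 k'"
    using assms(5,6) unfolding Iall_def by blast
  define t t' where "t = eta - real k * pi" and "t' = eta' - real k' * pi"
  note th1 = assms(1,2)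
  have t: "th1 \<le> t" "t \<le> pi - th1" and t': "th1 \<le> t'" "t' \<le> pi - th1"
    using k k' unfolding mem_Ik_iff[OF th1] t_def t'_def by auto
  have roots: "Phi_branch th1 k t = phi1" "Phi_branch th1 k' t' = phi1"
    using Phi_eq_Phi_branch[OF th1 k] Phi_eq_Phi_branch[OF th1 k'] assms(8,9)
    unfolding t_def t'_def by auto
  have S_eqs: "S th1 eta = S_branch th1 k t" "S th1 eta' = S_branch th1 k' t'"
    using S_eq_S_branch[OF th1 k] S_eq_S_branch[OF th1 k'] unfolding t_def t'_def by auto
  have "\<not> k' < k" using Ik_less_Ik[OF th1 k' k] assms(7) by auto
  then consider "k = k'" | "k < k'" by linarith
  then show ?thesis
  proof cases
    case 1
    then have "t < t'" using assms(7) unfolding t_def t'_def by simp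
    with 1 show ?thesis
      unfolding S_eqs using S_branch_less_same_branch[OF th1] t t' roots by blast
  next
    case 2
    then show ?thesis
      unfolding S_eqs using S_branch_less_higher_branch[OF th1 2] t t' roots assms(4) by blast
  qed
qed

end
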